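(* If $t\le n-2$, then the action protocol $P^{\mathit{basic}}$ implements the knowledge-based program $\mathbf P^0$ in the EBA context $\gamma_{\mathit{basic},n,t}$, where $P^{\mathit{basic}}_i$ is: if $\mathit{decided}_i\ne\bot$ then $\mathtt{noop}$; else if $\mathit{init}_i=0$ or $\mathit{rd}_i=0$ then $\mathtt{decide}_i(0)$; else if $\#1_i>n-\mathit{time}_i$ or $\mathit{rd}_i=1$ then $\mathtt{decide}_i(1)$; else $\mathtt{noop}$.
   Context: Agents and runs. There are $n$ agents $\mathit{Agt}=\{1,\ldots,n\}$; time is $m\in\mathbb N$, and round $m+1$ is the step from time $m$ to time $m+1$. An information-exchange protocol $\mathcal E$ specifies for each agent $i$: a set $L_i$ of local states, a set $I_i\subseteq L_i$ of initial states, a set $A_i$ of actions, a set $M_i$ of messages, a function giving for $s\in L_i$, $a\in A_i$ and each agent $j$ the message $\mu_{ij}(s,a)\in M_i\cup\{\bot\}$ that $i$ sends to $j$ ($\bot$ means no message), and a transition function $\delta_i:L_i\times A_i\times\prod_j(M_j\cup\{\bot\})\to L_i$. A failure pattern is a pair $(\mathcal N,F)$ with $\mathcal N\subseteq\mathit{Agt}$ (the nonfaulty agents) and $F:\mathbb N\times\mathit{Agt}\times\mathit{Agt}\to\{0,1\}$, where $F(m,i,j)=0$ means the message from $i$ to $j$ in round $m+1$ is lost. The sending-omissions failure model $SO(t)$ ($t<n$) is the set of failure patterns with $|\mathit{Agt}\setminus\mathcal N|\le t$ such that $F(m,i,j)=0$ implies $i\notin\mathcal N$. An action protocol $P$ gives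 each agent $i$ a map $P_i:L_i\to A_i$. Given $\mathcal E$, a failure model $\mathcal F$ and $P$, each initial global state (a failure pattern $(\mathcal N,F)\in\mathcal F$ and an $s_i\in I_i$ for each $i$) determines a unique run $r$: if $r_i(k)$ is $i$'s local state at time $k$, then $i$ performs $a_i=P_i(r_i(k))$, agent $j$ receives $m'_{ij}=\mu_{ij}(r_i(k),a_i)$ if $F(k,i,j)=1$ and $\bot$ otherwise, and $r_i(k+1)=\delta_i(r_i(k),a_i,(m'_{1i},\ldots,m'_{ni}))$; the failure pattern is fixed in the run and $\mathcal N(r)$ denotes its nonfaulty set. $\mathcal R_{\mathcal E,\mathcal F,P}$ is the set of all such runs. An interpreted system $\mathcal I=(\mathcal R,\pi)$ is a set of runs with an interpretation $\pi$ of primitive propositions at points $(r,m)$. $\mathcal I,(r,m)\models K_i\varphi$ iff $\varphi$ holds at all points $(r',m')$ of $\mathcal I$ with $r'_i(m')=r_i(m)$; $\bigcirc\varphi$ holds at $(r,m)$ iff $\varphi$ holds at $(r,m+1)$; $\ominus\varphi$ holds at $(r,m)$ iff $m>0$ and $\varphi$ holds at $(r,m-1)$. EBA contexts. An EBA context is a tuple $\gamma=(\mathcal E,\mathcal F,\pi)$ such that: each $A_i=\{\mathtt{decide}_i(0),\mathtt{decide}_i(1),\mathtt{noop}\}$; local states have the form $\langle \mathit{time}_i,\mathit{init}_i,\mathit{decided}_i,\mathit{rd}_i,\ldots\rangle$ with $\mathit{time}_i\in\mathbb N$, $\mathit{init}_i\in\{0,1\}$ (initial preference), $\mathit{decided}_i,\mathit{rd}_i\in\{0,1,\bot\}$;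 initial states have the form $\langle 0,\mathit{init}_i,\bot,\bot,\ldots\rangle$; there are pairwise disjoint sets $M^0,M^1,M^2$ with $\bot\notin M^0\cup M^1$ such that an agent performing $\mathtt{decide}_i(0)$ (resp. $\mathtt{decide}_i(1)$, resp. $\mathtt{noop}$) sends every agent a message in $M^0$ (resp. $M^1$, resp. $M^2$); $\delta_i$ increments $\mathit{time}_i$, sets $\mathit{decided}_i:=v$ if the action is $\mathtt{decide}_i(v)$ (otherwise leaves it unchanged), and sets $\mathit{rd}_i$ to $0$ (resp. $1$) if in that round $i$ received a message from an agent performing $\mathtt{decide}(0)$ (resp. $\mathtt{decide}(1)$), and to $\bot$ otherwise; $\pi$ interprets $\mathit{init}_i=v$, $\mathit{decided}_i=v$, $\mathit{time}_i=k$ by reading $i$'s local state, and $i\in\mathcal N$ as true at $(r,m)$ iff $i\in\mathcal N(r)$. Abbreviations: $\mathit{jdecided}_i=v$ is $\mathit{decided}_i=v\wedge\ominus(\mathit{decided}_i=\bot)$; $\mathit{deciding}_i=v$ is $\mathit{decided}_i=\bot\wedge\bigcirc(\mathit{decided}_i=v)$. For an action protocol $P$, $\mathcal I_{\gamma,P}=(\mathcal R_{\mathcal E,\mathcal F,P},\pi)$. Knowledge-based programs. A knowledge-based program $\mathbf P=(\mathbf P_1,\ldots,\mathbf P_n)$ has each $\mathbf P_i$ generated by $\mathbf P_i::=a\mid\text{if }\varphi\text{ then }\mathbf P_i\text{ else }\mathbf P_i$ with $a\in A_i$ and each test $\varphi$ a Boolean combination of formulas $K_i\psi$ and propositions determined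 by $i$'s local state; its truth at a point depends only on $i$'s local state. Given $\mathcal I$ and a local state $s$ of $i$, $\mathbf P_i^{\mathcal I}(s)$ is the action obtained by evaluating the tests at $s$ in $\mathcal I$. An action protocol $P$ implements $\mathbf P$ in $\gamma$ if $P_i(s)=\mathbf P_i^{\mathcal I}(s)$ for every $i$ and every local state $s$ of $i$ arising in $\mathcal I=\mathcal I_{\gamma,P}$. The program $\mathbf P^0$: for each agent $i$, $\mathbf P^0_i$ is: if $\mathit{decided}_i\neq\bot$ then $\mathtt{noop}$; else if $\mathit{init}_i=0\vee K_i(\bigvee_{j\in\mathit{Agt}}\mathit{jdecided}_j=0)$ then $\mathtt{decide}_i(0)$; else if $K_i(\bigwedge_{j\in\mathit{Agt}}\neg(\mathit{deciding}_j=0))$ then $\mathtt{decide}_i(1)$; else $\mathtt{noop}$. Basic context. $\gamma_{\mathit{basic},n,t}=(\mathcal E_{\mathit{basic}}(n),SO(t),\pi_{\mathit{basic},n})$, where local states are $\langle\mathit{time}_i,\mathit{init}_i,\mathit{decided}_i,\mathit{rd}_i,\#1_i\rangle$ with $\#1_i\in\{0,\ldots,n\}$, initial states are $\langle0,\mathit{init}_i,\bot,\bot,0\rangle$, $M_i=\{0,1,(\mathit{init},1)\}$ ($M^0=\{0\},M^1=\{1\},M^2=\{(\mathit{init},1),\bot\}$), $\mu_{ij}(s,\mathtt{decide}_i(v))=v$, $\mu_{ij}(s,\mathtt{noop})=(\mathit{init},1)$ if $s$ has the form $\langle m,1,\bot,\bot,k\rangle$, and $\mu_{ij}(s,a)=\bot$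 otherwise; $\delta_i$ updates the first four components as in EBA contexts and sets $\#1_i$ to the number of $(\mathit{init},1)$ messages received in the current round if $\mathit{decided}_i=\bot$ and $i$ receives no message $0$ or $1$ in that round, and to $0$ otherwise; $\pi_{\mathit{basic},n}$ interprets $\mathit{time}_i=k$, $\mathit{init}_i=v$, $\mathit{decided}_i=v$, $\mathit{rd}_i=v$, $\#1_i=k$, $i\in\mathcal N$ in the obvious way. *)

theory Defs
  imports Main
begin

text \<open>Agents are 0, ..., n-1 (the paper's 1..n shifted by one).
  Three-valued components (values 0, 1, bottom) are encoded as bool option:
  None = bottom, Some False = 0, Some True = 1.  init is a bool (True = 1).\<close>

datatype action = Decide bool | Noop

datatype msg = MDec bool | MInit1   \<comment> \<open>MDec v is message v; MInit1 is (init,1)\<close>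

record lstate =
  ls_time :: nat
  ls_init :: bool
  ls_decided :: "bool option"
  ls_rd :: "bool option"
  ls_cnt :: nat     \<comment> \<open>the component #1\<close>

definition init_state :: "bool \<Rightarrow> lstate" where
  "init_state b = \<lparr>ls_time = 0, ls_init = b, ls_decided = None, ls_rd = None, ls_cnt = 0\<rparr>"

definition mu :: "lstate \<Rightarrow> action \<Rightarrow> msg option" where
  "mu s a = (case a of
      Decide v \<Rightarrow> Some (MDec v)
    | Noop \<Rightarrow> (if ls_init s \<and> ls_decided s = None \<and> ls_rd s = None then Some MInit1 else None))"

definition delta :: "nat \<Rightarrow> lstate \<Rightarrow> action \<Rightarrow> (nat \<Rightarrow> msg option) \<Rightarrow> lstate" where
  "delta n s a rcv =
     \<lparr>ls_time = Suc (ls_time s),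
      ls_init = ls_init s,
      ls_decided = (case a of Decide v \<Rightarrow> Some v | Noop \<Rightarrow> ls_decided s),
      ls_rd = (if \<exists>j<n. rcv j = Some (MDec False) then Some False
               else if \<exists>j<n. rcv j = Some (MDec True) then Some True else None),
      ls_cnt = (if ls_decided s = None \<and> \<not> (\<exists>j<n. rcv j = Some (MDec False) \<or> rcv j = Some (MDec True))
                then card {j. j < n \<and> rcv j = Some MInit1} else 0)\<rparr>"

text \<open>Failure patterns (N, F); F m i j = False means the message from i to j in round m+1 is lost.\<close>
type_synonym fpat = "nat set \<times> (nat \<Rightarrow> nat \<Rightarrow> nat \<Rightarrow> bool)"

definition SO :: "nat \<Rightarrow> nat \<Rightarrow> fpat set" where
  "SO n t = {(N, F). N \<subseteq> {..<n} \<and> card ({..<n} - N) \<le> t \<and>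
                     (\<forall>m i j. \<not> F m i j \<longrightarrow> i \<notin> N)}"

type_synonym protocol = "nat \<Rightarrow> lstate \<Rightarrow> action"

fun gstate :: "nat \<Rightarrow> protocol \<Rightarrow> fpat \<Rightarrow> (nat \<Rightarrow> bool) \<Rightarrow> nat \<Rightarrow> nat \<Rightarrow> lstate" where
  "gstate n P fp ini 0 = (\<lambda>i. init_state (ini i))"
| "gstate n P fp ini (Suc m) =
     (\<lambda>i. delta n (gstate n P fp ini m i) (P i (gstate n P fp ini m i))
           (\<lambda>j. if snd fp m j i then mu (gstate n P fp ini m j) (P j (gstate n P fp ini m j)) else None))"

text \<open>A run is given by its initial global state: a failure pattern and initial preferences.\<close>
type_synonym run = "fpat \<times> (nat \<Rightarrow> bool)"

definition runs :: "nat \<Rightarrow> nat \<Rightarrow> run set" where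
  "runs n t = SO n t \<times> UNIV"

definition lst :: "nat \<Rightarrow> protocol \<Rightarrow> run \<Rightarrow> nat \<Rightarrow> nat \<Rightarrow> lstate" where
  "lst n P r m i = gstate n P (fst r) (snd r) m i"

definition knows :: "nat \<Rightarrow> nat \<Rightarrow> protocol \<Rightarrow> nat \<Rightarrow> lstate \<Rightarrow> (run \<Rightarrow> nat \<Rightarrow> bool) \<Rightarrow> bool" where
  "knows n t P i s \<phi> = (\<forall>r\<in>runs n t. \<forall>m. lst n P r m i = s \<longrightarrow> \<phi> r m)"

definition jdecided0 :: "nat \<Rightarrow> protocol \<Rightarrow> run \<Rightarrow> nat \<Rightarrow> nat \<Rightarrow> bool" where
  "jdecided0 n P r m j = (ls_decided (lst n P r m j) = Some False \<and>
                          m > 0 \<and> ls_decided (lst n P r (m - 1) j) = None)"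

definition deciding0 :: "nat \<Rightarrow> protocol \<Rightarrow> run \<Rightarrow> nat \<Rightarrow> nat \<Rightarrow> bool" where
  "deciding0 n P r m j = (ls_decided (lst n P r m j) = None \<and>
                          ls_decided (lst n P r (Suc m) j) = Some False)"

definition P0 :: "nat \<Rightarrow> nat \<Rightarrow> protocol \<Rightarrow> nat \<Rightarrow> lstate \<Rightarrow> action" where
  "P0 n t P i s =
     (if ls_decided s \<noteq> None then Noop
      else if \<not> ls_init s \<or> knows n t P i s (\<lambda>r m. \<exists>j<n. jdecided0 n P r m j) then Decide False
      else if knows n t P i s (\<lambda>r m. \<forall>j<n. \<not> deciding0 n P r m j) then Decide True
      else Noop)"

definition implements :: "nat \<Rightarrow> nat \<Rightarrow> protocol \<Rightarrow> bool" where
  "implements n t P = (\<forall>i<n. \<forall>r\<in>runs n t. \<forall>m.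
      P i (lst n P r m i) = P0 n t P i (lst n P r m i))"

definition Pbasic :: "nat \<Rightarrow> protocol" where
  "Pbasic n i s =
     (if ls_decided s \<noteq> None then Noop
      else if \<not> ls_init s \<or> ls_rd s = Some False then Decide False
      else if int (ls_cnt s) > int n - int (ls_time s) \<or> ls_rd s = Some True then Decide True
      else Noop)"

end

theory Submission
  imports Defs "HOL-Combinatorics.Transposition"
begin

text \<open>A decision 0 is only ever taken on preference 0 or on hearing a decision 0 made one round
  earlier, so rd = 0 certifies that someone just decided 0.  An undecided agent with preference 1
  that hears no decision is sent (init,1) by all n - t nonfaulty agents, since none of them can
  have decided unheard; and if someone decides 0 in round k+1, then at least k agents have already
  decided 0 and are not among the senders.  Hence a count above n - k certifies that nobody is
  deciding 0, and a decision 1 relayed through rd = 1 inherits this certificate.  Conversely,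
  whenever the protocol waits, or rd is not 0, explicit sending-omission runs giving agent i the
  same local state refute the knowledge required by P0: a chain of faulty agents passes a
  decision 0 on privately, possibly ending in a nonfaulty agent that decides 0 just now.\<close>

context
  fixes n :: nat and fp :: fpat and ini :: "nat \<Rightarrow> bool"
begin

abbreviation state :: "nat \<Rightarrow> nat \<Rightarrow> lstate" where
  "state \<equiv> gstate n (Pbasic n) fp ini"

lemma state_Suc:
  "state (Suc k) a = delta n (state k a) (Pbasic n a (state k a))
     (\<lambda>b. if snd fp k b a then mu (state k b) (Pbasic n b (state k b)) else None)"
  by simp

declare gstate.simps(2)[simp del]

lemma ls_time_state [simp]: "ls_time (state k a) = k"
  by (induction k arbitrary: a) (auto simp: state_Suc delta_def init_state_def)

lemma ls_init_state [simp]: "ls_init (state k a) = ini a"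
  by (induction k arbitrary: a) (auto simp: state_Suc delta_def init_state_def)

lemma decided_state_Suc:
  "ls_decided (state (Suc k) a) =
     (case Pbasic n a (state k a) of Decide v \<Rightarrow> Some v | Noop \<Rightarrow> ls_decided (state k a))"
  by (simp add: state_Suc delta_def)

lemma undecided_iff_Noop_before:
  "ls_decided (state m a) = None \<longleftrightarrow> (\<forall>k<m. Pbasic n a (state k a) = Noop)"
proof (induction m)
  case 0
  show ?case by (simp add: init_state_def)
next
  case (Suc m)
  show ?case
    by (auto simp: decided_state_Suc Suc.IH less_Suc_eq split: action.split)
qed

lemma Pbasic_decided: "ls_decided s \<noteq> None \<Longrightarrow> Pbasic n a s = Noop"
  by (simp add: Pbasic_def)

lemma decided_stable:
  assumes "ls_decided (state k a) \<noteq> None" and "k \<le> k'"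
  shows "ls_decided (state k' a) = ls_decided (state k a)"
  using assms(2)
proof (induction k' rule: dec_induct)
  case (step k')
  with assms(1) show ?case by (simp add: decided_state_Suc Pbasic_decided)
qed simp

lemma mu_eq_MDec_iff: "mu s act = Some (MDec v) \<longleftrightarrow> act = Decide v"
  by (cases act) (auto simp: mu_def)

lemma rd_state_Suc:
  "ls_rd (state (Suc k) a) =
     (if \<exists>b<n. snd fp k b a \<and> Pbasic n b (state k b) = Decide False then Some False
      else if \<exists>b<n. snd fp k b a \<and> Pbasic n b (state k b) = Decide True then Some True
      else None)"
proof -
  have "(\<exists>b<n. (if snd fp k b a then mu (state k b) (Pbasic n b (state k b)) else None) = Some (MDec v))
     \<longleftrightarrow> (\<exists>b<n. snd fp k b a \<and> Pbasic n b (state k b) = Decide v)" for v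
    by (auto simp: mu_eq_MDec_iff)
  then show ?thesis
    by (simp only: state_Suc delta_def lstate.simps)
qed

lemma mu_eq_MInit1_iff:
  "mu s act = Some MInit1 \<longleftrightarrow> act = Noop \<and> ls_init s \<and> ls_decided s = None \<and> ls_rd s = None"
  by (cases act) (auto simp: mu_def)

lemma cnt_state_Suc:
  assumes "ls_rd (state (Suc k) a) = None" and "ls_decided (state k a) = None"
  shows "ls_cnt (state (Suc k) a) =
    card {b. b < n \<and> snd fp k b a \<and> mu (state k b) (Pbasic n b (state k b)) = Some MInit1}"
  using assms by (auto simp: state_Suc delta_def split: if_splits intro!: arg_cong[where f=card])

lemma cnt_state_le: "ls_cnt (state k a) \<le> n"
proof (cases k)
  case 0
  then show ?thesis by (simp add: init_state_def)
next
  case (Suc k')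
  have "card {j. j < n \<and> P j} \<le> n" for P
    using card_mono[of "{..<n}" "{j. j < n \<and> P j}"] by auto
  with Suc show ?thesis by (simp add: state_Suc delta_def)
qed

lemma Pbasic_Noop_undecided:
  assumes "ls_decided s = None" and "Pbasic n b s = Noop"
  shows "ls_init s \<and> ls_rd s = None \<and> \<not> int (ls_cnt s) > int n - int (ls_time s)"
  using assms by (cases "ls_rd s") (auto simp: Pbasic_def split: if_splits)

lemma Pbasic_Decide_True:
  "Pbasic n a s = Decide True \<Longrightarrow> ls_decided s = None \<and> ls_init s \<and> ls_rd s \<noteq> Some False \<and>
     (int (ls_cnt s) > int n - int (ls_time s) \<or> ls_rd s = Some True)"
  by (auto simp: Pbasic_def split: if_splits)

lemma Pbasic_initial_not_Decide_True: "Pbasic n a (init_state b) \<noteq> Decide True"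
  by (auto simp: Pbasic_def init_state_def)

lemma rd_Some_False_sender:
  "ls_rd (state (Suc k) a) = Some False \<Longrightarrow> \<exists>b<n. snd fp k b a \<and> Pbasic n b (state k b) = Decide False"
  by (auto simp: rd_state_Suc split: if_splits)

lemma rd_Some_True_sender:
  "ls_rd (state (Suc k) a) = Some True \<Longrightarrow> \<exists>b<n. snd fp k b a \<and> Pbasic n b (state k b) = Decide True"
  by (auto simp: rd_state_Suc split: if_splits)

lemma rd_not_None_if_decision_delivered:
  "b < n \<Longrightarrow> snd fp k b a \<Longrightarrow> Pbasic n b (state k b) = Decide v \<Longrightarrow> ls_rd (state (Suc k) a) \<noteq> None"
  by (cases v) (auto simp: rd_state_Suc)

lemma cnt_zero_if_rd_True: "ls_rd (state (Suc k) a) = Some True \<Longrightarrow> ls_cnt (state (Suc k) a) = 0"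
  by (auto simp: state_Suc delta_def split: if_splits)

definition someone_decides0 :: "nat \<Rightarrow> bool" where
  "someone_decides0 k \<longleftrightarrow>
     (\<exists>a<n. ls_decided (state k a) = None \<and> ls_decided (state (Suc k) a) = Some False)"

definition decided0 :: "nat \<Rightarrow> nat set" where
  "decided0 k = {a. a < n \<and> ls_decided (state k a) = Some False}"

text \<open>An agent with preference 1 decides 0 only upon hearing a decision 0, made one round
  earlier by an agent that was still undecided.\<close>
lemma someone_decides0_Suc: "someone_decides0 (Suc k) \<Longrightarrow> someone_decides0 k"
proof -
  assume "someone_decides0 (Suc k)"
  then obtain a where a: "a < n" "ls_decided (state (Suc k) a) = None"
    "ls_decided (state (Suc (Suc k)) a) = Some False"
    unfolding someone_decides0_def by blast
  have act: "Pbasic n a (state (Suc k) a) = Decide False"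
    using a(2,3) by (auto simp: decided_state_Suc split: action.splits)
  have "ini a"
  proof (rule ccontr)
    assume "\<not> ini a"
    then have "ls_decided (state (Suc 0) a) = Some False"
      by (simp add: decided_state_Suc Pbasic_def init_state_def)
    then have "ls_decided (state (Suc k) a) = Some False"
      using decided_stable[of "Suc 0" a "Suc k"] by simp
    with a(2) show False by simp
  qed
  with a(2) act have "ls_rd (state (Suc k) a) = Some False"
    by (auto simp: Pbasic_def split: if_splits)
  then obtain b where b: "b < n" "Pbasic n b (state k b) = Decide False"
    using rd_Some_False_sender by blast
  then have "ls_decided (state k b) = None"
    using Pbasic_decided by fastforce
  with b show "someone_decides0 k"
    unfolding someone_decides0_def by (auto simp: decided_state_Suc)
qed

lemma card_decided0_ge: "someone_decides0 k \<Longrightarrow> k \<le> card (decided0 k)"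
proof (induction k)
  case (Suc k)
  then have "someone_decides0 k"
    using someone_decides0_Suc by blast
  with Suc.IH have ih: "k \<le> card (decided0 k)"
    by simp
  from \<open>someone_decides0 k\<close> obtain b where b: "b < n" "ls_decided (state k b) = None"
    "ls_decided (state (Suc k) b) = Some False"
    unfolding someone_decides0_def by blast
  have "decided0 k \<subseteq> decided0 (Suc k)"
    unfolding decided0_def using decided_stable[of k _ "Suc k"] by fastforce
  with b have "insert b (decided0 k) \<subseteq> decided0 (Suc k)" and "b \<notin> decided0 k"
    unfolding decided0_def by auto
  moreover have "finite (decided0 j)" for j
    unfolding decided0_def by auto
  ultimately have "Suc (card (decided0 k)) \<le> card (decided0 (Suc k))"
    using card_mono[of "decided0 (Suc k)" "insert b (decided0 k)"] by simp
  with ih show ?case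
    by simp
qed simp

text \<open>The (init,1)-senders counted by an undecided agent are themselves undecided, so they are
  disjoint from the at least k+1 agents that have decided 0 when someone decides 0 in round k+2.\<close>
lemma cnt_bound_if_someone_decides0:
  assumes "someone_decides0 (Suc k)" "ls_decided (state (Suc k) a) = None"
    and "ls_rd (state (Suc k) a) = None"
  shows "ls_cnt (state (Suc k) a) + Suc k \<le> n"
proof -
  define S where
    "S = {b. b < n \<and> snd fp k b a \<and> mu (state k b) (Pbasic n b (state k b)) = Some MInit1}"
  have "ls_decided (state k a) = None"
    using assms(2) decided_stable[of k a "Suc k"] by fastforce
  with assms(3) have cnt: "ls_cnt (state (Suc k) a) = card S"
    unfolding S_def by (rule cnt_state_Suc)
  have "ls_decided (state (Suc k) b) = None" if "b \<in> S" for b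
    using that unfolding S_def mu_eq_MInit1_iff by (simp add: decided_state_Suc)
  then have disj: "S \<inter> decided0 (Suc k) = {}"
    unfolding decided0_def by auto
  have "finite S" "finite (decided0 (Suc k))"
    unfolding S_def decided0_def by auto
  then have "card S + card (decided0 (Suc k)) = card (S \<union> decided0 (Suc k))"
    using disj by (simp add: card_Un_disjoint)
  also have "\<dots> \<le> n"
    by (rule card_mono[of "{..<n}", simplified]) (auto simp: S_def decided0_def)
  finally show ?thesis
    using card_decided0_ge[OF assms(1)] cnt by simp
qed

text \<open>A count above n - k is excluded by the previous lemma; a relayed decision 1 inherits the
  claim from the round before.\<close>
lemma Decide_True_imp_not_someone_decides0:
  "Pbasic n a (state k a) = Decide True \<Longrightarrow> \<not> someone_decides0 k"
proof (induction k arbitrary: a)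
  case 0
  then show ?case
    using Pbasic_initial_not_Decide_True by simp
next
  case (Suc k)
  have undecided: "ls_decided (state (Suc k) a) = None"
    using Suc.prems Pbasic_decided by fastforce
  have rule1: "ls_rd (state (Suc k) a) \<noteq> Some False"
    "int (ls_cnt (state (Suc k) a)) > int n - int (Suc k) \<or> ls_rd (state (Suc k) a) = Some True"
    using Pbasic_Decide_True[OF Suc.prems] by auto
  show ?case
  proof (cases "ls_rd (state (Suc k) a)")
    case None
    with rule1 show ?thesis
      using cnt_bound_if_someone_decides0[OF _ undecided None] by fastforce
  next
    case (Some v)
    with rule1 have "ls_rd (state (Suc k) a) = Some True"
      by (cases v) auto
    then obtain b where "Pbasic n b (state k b) = Decide True"
      using rd_Some_True_sender by blast
    then show ?thesis
      using Suc.IH someone_decides0_Suc by blast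
  qed
qed

lemma undecided_state_before:
  assumes "ls_decided (state m a) = None" and "k < m"
  shows "ls_decided (state k a) = None \<and> ls_init (state k a) \<and> ls_rd (state k a) = None \<and>
    \<not> int (ls_cnt (state k a)) > int n - int k"
proof -
  have "Pbasic n a (state k a) = Noop"
    using assms undecided_iff_Noop_before by blast
  moreover have "ls_decided (state k a) = None"
    using assms undecided_iff_Noop_before[of m a] undecided_iff_Noop_before[of k a] by auto
  ultimately show ?thesis
    using Pbasic_Noop_undecided[of "state k a"] by simp
qed

text \<open>A nonfaulty agent that had decided would have been heard, so all of the at least n - t
  nonfaulty agents still send (init,1) in round k+1.\<close>
lemma cnt_ge_if_no_decision_heard:
  assumes SO: "fp \<in> SO n t"
    and no_rd: "\<forall>j\<in>{1..Suc k}. ls_rd (state j a) = None"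
    and a_undecided: "ls_decided (state k a) = None"
  shows "n - t \<le> ls_cnt (state (Suc k) a)"
proof -
  obtain N F where fp: "fp = (N, F)"
    by (cases fp)
  have N: "N \<subseteq> {..<n}" "card ({..<n} - N) \<le> t" "\<And>k b a. b \<in> N \<Longrightarrow> snd fp k b a"
    using SO fp unfolding SO_def by auto
  have Noop: "Pbasic n b (state j b) = Noop" if "b \<in> N" "j \<le> k" for b j
  proof (cases "Pbasic n b (state j b)")
    case (Decide v)
    then have "ls_rd (state (Suc j) a) \<noteq> None"
      using rd_not_None_if_decision_delivered N that by blast
    with no_rd that show ?thesis
      by simp
  qed
  define S where
    "S = {b. b < n \<and> snd fp k b a \<and> mu (state k b) (Pbasic n b (state k b)) = Some MInit1}"
  have "N \<subseteq> S"
  proof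
    fix b
    assume "b \<in> N"
    with Noop have "\<forall>j<Suc k. Pbasic n b (state j b) = Noop"
      by simp
    then have "ls_decided (state k b) = None" "Pbasic n b (state k b) = Noop"
      using undecided_iff_Noop_before[of k b] by auto
    with \<open>b \<in> N\<close> N show "b \<in> S"
      unfolding S_def by (auto simp: mu_eq_MInit1_iff dest: Pbasic_Noop_undecided)
  qed
  then have "card N \<le> card S"
    by (rule card_mono[rotated]) (simp add: S_def)
  moreover have "ls_cnt (state (Suc k) a) = card S"
    using cnt_state_Suc[OF _ a_undecided] no_rd unfolding S_def by simp
  moreover have "card ({..<n} - N) = n - card N"
    using N(1) by (simp add: card_Diff_subset finite_subset)
  ultimately show ?thesis
    using N(2) by linarith
qed

lemma undecided_cnt_ge:
  assumes "fp \<in> SO n t" and "ls_decided (state m a) = None"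
    and "0 < m" and "ls_rd (state m a) = None"
  shows "n - t \<le> ls_cnt (state m a)"
proof -
  obtain k where m: "m = Suc k"
    using \<open>0 < m\<close> by (cases m) auto
  have "\<forall>j\<in>{1..Suc k}. ls_rd (state j a) = None"
    using undecided_state_before[OF assms(2)] assms(4) m by (auto simp: le_less)
  moreover have "ls_decided (state k a) = None"
    using undecided_state_before[OF assms(2)] m by simp
  ultimately show ?thesis
    using cnt_ge_if_no_decision_heard[OF assms(1)] m by simp
qed

lemma undecided_time_le:
  assumes "fp \<in> SO n t" and "t < n" and "ls_decided (state m a) = None"
  shows "m \<le> Suc t"
proof (cases "m \<le> 1")
  case False
  then obtain k where m: "m = Suc (Suc k)"
    by (intro that[of "m - 2"]) simp
  then have earlier: "ls_decided (state (Suc k) a) = None" "ls_rd (state (Suc k) a) = None"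
    "\<not> int (ls_cnt (state (Suc k) a)) > int n - int (Suc k)"
    using undecided_state_before[OF assms(3), of "Suc k"] by auto
  have "n - t \<le> ls_cnt (state (Suc k) a)"
    using undecided_cnt_ge[OF assms(1) earlier(1)] earlier(2) by simp
  with earlier(3) assms(2) m show ?thesis
    by linarith
qed simp

lemma rd_True_time_cnt:
  assumes "ls_rd (state m a) = Some True"
  shows "2 \<le> m \<and> ls_cnt (state m a) = 0"
proof -
  obtain k where m: "m = Suc k"
    using assms by (cases m) (auto simp: init_state_def)
  have "k \<noteq> 0"
  proof
    assume "k = 0"
    then obtain b where "Pbasic n b (state 0 b) = Decide True"
      using rd_Some_True_sender assms m by blast
    then show False
      using Pbasic_initial_not_Decide_True by simp
  qed
  with assms m show ?thesis
    using cnt_zero_if_rd_True by auto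
qed

end

lemma delta_no_decision1_heard:
  assumes "(\<exists>j<n. rcv j = Some (MDec False)) \<longleftrightarrow> Z" and "\<not> (\<exists>j<n. rcv j = Some (MDec True))"
    and "{j. j < n \<and> rcv j = Some MInit1} = S"
  shows "delta n s act rcv =
    \<lparr>ls_time = Suc (ls_time s), ls_init = ls_init s,
     ls_decided = (case act of Decide v \<Rightarrow> Some v | Noop \<Rightarrow> ls_decided s),
     ls_rd = (if Z then Some False else None),
     ls_cnt = (if ls_decided s = None \<and> \<not> Z then card S else 0)\<rparr>"
  unfolding delta_def using assms by auto

lemma delta_only_decision1_heard:
  assumes "\<not> (\<exists>j<n. rcv j = Some (MDec False))" and "\<exists>j<n. rcv j = Some (MDec True)"
  shows "delta n s act rcv =
    \<lparr>ls_time = Suc (ls_time s), ls_init = ls_init s,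
     ls_decided = (case act of Decide v \<Rightarrow> Some v | Noop \<Rightarrow> ls_decided s),
     ls_rd = Some True, ls_cnt = 0\<rparr>"
  unfolding delta_def using assms by auto

definition waiting_state :: "nat \<Rightarrow> nat \<Rightarrow> lstate" where
  "waiting_state c k =
     \<lparr>ls_time = k, ls_init = True, ls_decided = None, ls_rd = None,
      ls_cnt = (if k = 0 then 0 else c)\<rparr>"

lemma Pbasic_waiting_state: "k \<le> t \<Longrightarrow> t < n \<Longrightarrow> Pbasic n a (waiting_state (n - t) k) = Noop"
  by (auto simp: Pbasic_def waiting_state_def)

lemma mu_waiting_state: "mu (waiting_state c k) Noop = Some MInit1"
  by (simp add: mu_def waiting_state_def)

text \<open>Witness runs: a chain l 0, ..., l (q-1) passes a decision 0 on privately: l 0 prefers 0,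
  and l j decides 0 at time j and is heard only by l (j+1).  The nonfaulty agents N reach
  everybody, in round m the agents in C additionally reach i, and all other messages are lost.
  chain_state c j k is the local state of l j at time k.\<close>

definition chain_state :: "nat \<Rightarrow> nat \<Rightarrow> nat \<Rightarrow> lstate" where
  "chain_state c j k =
    (if k < j then waiting_state c k
     else if k = j then
       \<lparr>ls_time = j, ls_init = (j \<noteq> 0), ls_decided = None,
        ls_rd = (if j = 0 then None else Some False), ls_cnt = 0\<rparr>
     else
       \<lparr>ls_time = k, ls_init = (j \<noteq> 0), ls_decided = Some False, ls_rd = None,
        ls_cnt = (if k = Suc j then c else 0)\<rparr>)"

definition chain_delivery ::
    "nat set \<Rightarrow> (nat \<Rightarrow> nat) \<Rightarrow> nat \<Rightarrow> nat \<Rightarrow> nat \<Rightarrow> nat set \<Rightarrow> nat \<Rightarrow> nat \<Rightarrow> nat \<Rightarrow> bool" where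
  "chain_delivery N l q m i C k a b \<longleftrightarrow>
     a \<in> N \<or> (Suc k < q \<and> a = l k \<and> b = l (Suc k)) \<or> (Suc k = m \<and> b = i \<and> a \<in> C)"

definition chain_init :: "(nat \<Rightarrow> nat) \<Rightarrow> nat \<Rightarrow> nat \<Rightarrow> bool" where
  "chain_init l q a \<longleftrightarrow> \<not> (0 < q \<and> a = l 0)"

definition chain_msg :: "(nat \<Rightarrow> nat) \<Rightarrow> nat \<Rightarrow> nat \<Rightarrow> nat \<Rightarrow> msg option" where
  "chain_msg l q k b =
    (if k < q \<and> b = l k then Some (MDec False)
     else if \<exists>j<q. j < k \<and> b = l j then None
     else Some MInit1)"

locale chain_witness =
  fixes n t :: nat and N C :: "nat set" and l :: "nat \<Rightarrow> nat" and q m i :: nat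
  assumes t_less_n: "t < n" and N_sub: "N \<subseteq> {..<n}" and card_N: "card N = n - t"
    and C_sub: "C \<subseteq> {..<n} - N" and q_le: "q \<le> Suc m" and m_le: "m \<le> Suc t"
    and l_range: "\<forall>j<q. l j < n" and inj_l: "inj_on l {..<q}" and l_not_i: "\<forall>j<q. l j \<noteq> i"
    and l_not_C: "\<forall>j<q. l j \<notin> C" and l_not_N: "\<forall>j<q. j < m \<longrightarrow> l j \<notin> N"
begin

abbreviation G :: "nat \<Rightarrow> nat \<Rightarrow> lstate" where
  "G \<equiv> gstate n (Pbasic n) (N, chain_delivery N l q m i C) (chain_init l q)"

definition invariant :: "nat \<Rightarrow> bool" where
  "invariant k \<longleftrightarrow> (\<forall>j<q. G k (l j) = chain_state (n - t) j k) \<and>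
     (\<forall>a. a \<notin> l ` {..<q} \<longrightarrow> G k a =
        (if a = i \<and> k = m \<and> 0 < m
         then \<lparr>ls_time = m, ls_init = True, ls_decided = None, ls_rd = None,
               ls_cnt = n - t + card C\<rparr>
         else waiting_state (n - t) k))"

lemma l_eq_iff: "j < q \<Longrightarrow> j' < q \<Longrightarrow> l j = l j' \<longleftrightarrow> j = j'"
  using inj_l by (auto dest: inj_onD)

lemma invariant_0: "invariant 0"
proof -
  have "G 0 (l j) = chain_state (n - t) j 0" if "j < q" for j
    using that
    by (cases j) (auto simp: chain_state_def waiting_state_def init_state_def chain_init_def l_eq_iff)
  moreover have "G 0 a = waiting_state (n - t) 0" if "a \<notin> l ` {..<q}" for a
    using that by (auto simp: waiting_state_def init_state_def chain_init_def)
  ultimately show ?thesis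
    unfolding invariant_def by auto
qed

lemma msg_before_m:
  assumes "invariant k" and "k < m"
  shows "mu (G k b) (Pbasic n b (G k b)) = chain_msg l q k b"
proof (cases "b \<in> l ` {..<q}")
  case True
  then obtain j where j: "j < q" "b = l j"
    by auto
  have st: "G k b = chain_state (n - t) j k"
    using assms(1) j unfolding invariant_def by auto
  have kt: "k \<le> t"
    using assms(2) m_le by simp
  consider "k < j" | "k = j" | "j < k"
    by linarith
  then show ?thesis
  proof cases
    case 1
    then have "\<not> (k < q \<and> l j = l k)" "\<not> (\<exists>j'<q. j' < k \<and> l j = l j')"
      using j l_eq_iff by (metis less_trans less_not_refl)+
    with 1 st j show ?thesis
      using Pbasic_waiting_state[OF kt t_less_n] mu_waiting_state
      by (simp add: chain_state_def chain_msg_def)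
  next
    case 2
    with st j show ?thesis
      by (auto simp: chain_state_def chain_msg_def Pbasic_def mu_def)
  next
    case 3
    then have "\<not> (k < q \<and> l j = l k)"
      using j l_eq_iff by (metis less_not_refl)
    with 3 st j show ?thesis
      by (auto simp: chain_state_def chain_msg_def Pbasic_def mu_def)
  qed
next
  case False
  then have "G k b = waiting_state (n - t) k"
    using assms unfolding invariant_def by auto
  moreover have "k \<le> t"
    using assms(2) m_le by simp
  ultimately show ?thesis
    using False Pbasic_waiting_state t_less_n mu_waiting_state by (auto simp: chain_msg_def)
qed

definition received :: "nat \<Rightarrow> nat \<Rightarrow> nat \<Rightarrow> msg option" where
  "received k a b = (if chain_delivery N l q m i C k b a then chain_msg l q k b else None)"

lemma received_decision0_iff:
  assumes "k < m"
  shows "(\<exists>b<n. received k a b = Some (MDec False)) \<longleftrightarrow> Suc k < q \<and> a = l (Suc k)"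
proof
  assume "\<exists>b<n. received k a b = Some (MDec False)"
  then obtain b where b: "chain_delivery N l q m i C k b a" "chain_msg l q k b = Some (MDec False)"
    by (auto simp: received_def split: if_splits)
  then have "k < q" "b = l k"
    by (auto simp: chain_msg_def split: if_splits)
  with assms have "b \<notin> N" "b \<notin> C"
    using l_not_N l_not_C by auto
  with b(1) show "Suc k < q \<and> a = l (Suc k)"
    by (auto simp: chain_delivery_def)
next
  assume "Suc k < q \<and> a = l (Suc k)"
  then show "\<exists>b<n. received k a b = Some (MDec False)"
    using l_range by (auto simp: received_def chain_delivery_def chain_msg_def intro!: exI[of _ "l k"])
qed

lemma no_decision1_received: "\<not> (\<exists>b<n. received k a b = Some (MDec True))"
  by (auto simp: chain_msg_def received_def)

lemma received_MInit1_eq: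
  assumes "k < m"
  shows "{b. b < n \<and> received k a b = Some MInit1} = N \<union> (if Suc k = m \<and> a = i then C else {})"
proof (intro set_eqI iffI)
  fix b
  assume "b \<in> {b. b < n \<and> received k a b = Some MInit1}"
  then have "chain_delivery N l q m i C k b a" "\<not> (k < q \<and> b = l k)"
    by (auto simp: chain_msg_def received_def split: if_splits)
  then show "b \<in> N \<union> (if Suc k = m \<and> a = i then C else {})"
    by (auto simp: chain_delivery_def)
next
  fix b
  assume b: "b \<in> N \<union> (if Suc k = m \<and> a = i then C else {})"
  then have "\<not> (\<exists>j<q. j \<le> k \<and> b = l j)"
    using l_not_N l_not_C assms by (fastforce split: if_splits)
  moreover have "b < n"
    using b N_sub C_sub by (auto split: if_splits)
  moreover have "chain_delivery N l q m i C k b a"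
    using b by (auto simp: chain_delivery_def split: if_splits)
  ultimately show "b \<in> {b. b < n \<and> received k a b = Some MInit1}"
    by (auto simp: received_def chain_msg_def)
qed

lemma card_received_MInit1:
  "card (N \<union> (if Suc k = m \<and> a = i then C else {})) =
     n - t + (if Suc k = m \<and> a = i then card C else 0)"
proof -
  have "finite N" "finite C"
    using N_sub C_sub by (auto intro: finite_subset)
  moreover have "N \<inter> C = {}"
    using C_sub by auto
  ultimately show ?thesis
    using card_N by (auto simp: card_Un_disjoint)
qed

lemma G_Suc:
  assumes "invariant k" and "k < m"
  shows "G (Suc k) a =
    \<lparr>ls_time = Suc (ls_time (G k a)), ls_init = ls_init (G k a),
     ls_decided = (case Pbasic n a (G k a) of Decide v \<Rightarrow> Some v | Noop \<Rightarrow> ls_decided (G k a)),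
     ls_rd = (if Suc k < q \<and> a = l (Suc k) then Some False else None),
     ls_cnt = (if ls_decided (G k a) = None \<and> \<not> (Suc k < q \<and> a = l (Suc k))
               then n - t + (if Suc k = m \<and> a = i then card C else 0) else 0)\<rparr>"
proof -
  have "G (Suc k) a = delta n (G k a) (Pbasic n a (G k a)) (received k a)"
    unfolding received_def by (simp only: state_Suc msg_before_m[OF assms] snd_conv)
  then show ?thesis
    unfolding delta_no_decision1_heard[OF received_decision0_iff[OF assms(2)]
        no_decision1_received received_MInit1_eq[OF assms(2)]] card_received_MInit1 .
qed

lemma invariant_Suc:
  assumes "invariant k" and "k < m"
  shows "invariant (Suc k)"
proof -
  have kt: "k \<le> t"
    using assms(2) m_le by simp
  note G_Suc = G_Suc[OF assms]
  have "G (Suc k) (l j) = chain_state (n - t) j (Suc k)" if j: "j < q" for j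
  proof -
    have st: "G k (l j) = chain_state (n - t) j k"
      using assms(1) j unfolding invariant_def by auto
    have ni: "l j \<noteq> i"
      using l_not_i j by simp
    consider "Suc k < j" | "Suc k = j" | "k = j" | "j < k"
      by linarith
    then show ?thesis
    proof cases
      case 1
      then have "l j \<noteq> l (Suc k)"
        using l_eq_iff j by (metis less_trans not_less_iff_gr_or_eq)
      with 1 st ni show ?thesis
        using Pbasic_waiting_state[OF kt t_less_n] card_N
        by (simp add: G_Suc chain_state_def waiting_state_def)
    next
      case 2
      with st j have "G k (l (Suc k)) = waiting_state (n - t) k" "Suc k < q"
        by (auto simp: chain_state_def)
      then have "G (Suc k) (l (Suc k)) = chain_state (n - t) (Suc k) (Suc k)"
        using Pbasic_waiting_state[OF kt t_less_n] by (simp add: G_Suc chain_state_def waiting_state_def)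
      with 2 show ?thesis
        by simp
    next
      case 3
      then have "l k \<noteq> l (Suc k) \<or> \<not> Suc k < q"
        using l_eq_iff j by (metis n_not_Suc_n)
      moreover have "G k (l k) = chain_state (n - t) k k" "l k \<noteq> i"
        using 3 st ni by simp_all
      ultimately have "G (Suc k) (l k) = chain_state (n - t) k (Suc k)"
        by (auto simp: G_Suc chain_state_def waiting_state_def Pbasic_def)
      with 3 show ?thesis
        by simp
    next
      case 4
      then have "l j \<noteq> l (Suc k) \<or> \<not> Suc k < q"
        using l_eq_iff j by (metis less_SucI less_not_refl)
      with 4 st ni show ?thesis
        by (auto simp: G_Suc chain_state_def waiting_state_def Pbasic_def)
    qed
  qed
  moreover have "G (Suc k) a =
      (if a = i \<and> Suc k = m \<and> 0 < m
       then \<lparr>ls_time = m, ls_init = True, ls_decided = None, ls_rd = None,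
             ls_cnt = n - t + card C\<rparr>
       else waiting_state (n - t) (Suc k))" if a: "a \<notin> l ` {..<q}" for a
  proof -
    have "G k a = waiting_state (n - t) k"
      using assms a unfolding invariant_def by auto
    moreover have "\<not> (Suc k < q \<and> a = l (Suc k))"
      using a by auto
    ultimately show ?thesis
      using Pbasic_waiting_state[OF kt t_less_n] card_N by (auto simp: G_Suc waiting_state_def)
  qed
  ultimately show ?thesis
    unfolding invariant_def by blast
qed

lemma invariant_le: "k \<le> m \<Longrightarrow> invariant k"
  by (induction k) (auto intro: invariant_0 invariant_Suc)

lemma G_outside_chain:
  assumes "a \<notin> l ` {..<q}"
  shows "ls_decided (G m a) = None"
    and "a = i \<Longrightarrow> G m i = \<lparr>ls_time = m, ls_init = True, ls_decided = None, ls_rd = None,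
      ls_cnt = (if m = 0 then 0 else n - t + card C)\<rparr>"
  using assms invariant_le[of m] unfolding invariant_def by (auto simp: waiting_state_def)

lemma chain_end_decides0:
  assumes "q = Suc m"
  shows "ls_decided (G m (l m)) = None \<and> ls_decided (G (Suc m) (l m)) = Some False"
proof -
  have "G m (l m) = chain_state (n - t) m m"
    using invariant_le[of m] assms unfolding invariant_def by auto
  then show ?thesis
    by (auto simp: decided_state_Suc chain_state_def Pbasic_def)
qed

end

text \<open>The witness run for hearing a decision 1 without a decision 0: all agents prefer 1, and
  in round m-1 the faulty agent f hears all n agents, so that it decides 1 at time m-1;
  this decision reaches only i.\<close>

definition decision1_delivery :: "nat set \<Rightarrow> nat \<Rightarrow> nat \<Rightarrow> nat \<Rightarrow> nat \<Rightarrow> nat \<Rightarrow> nat \<Rightarrow> bool" where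
  "decision1_delivery N f i m k a b \<longleftrightarrow>
     a \<in> N \<or> (Suc (Suc k) = m \<and> b = f) \<or> (Suc k = m \<and> a = f \<and> b = i)"

locale decision1_witness =
  fixes n t :: nat and N :: "nat set" and f i m :: nat
  assumes t_less_n: "t < n" and N_sub: "N \<subseteq> {..<n}" and card_N: "card N = n - t"
    and f_less_n: "f < n" and f_not_N: "f \<notin> N" and f_not_i: "f \<noteq> i"
    and m_ge: "2 \<le> m" and m_le: "m \<le> Suc t"
begin

abbreviation H :: "nat \<Rightarrow> nat \<Rightarrow> lstate" where
  "H \<equiv> gstate n (Pbasic n) (N, decision1_delivery N f i m) (\<lambda>_. True)"

lemma msg_H:
  assumes "k < m"
    and "\<forall>a. H k a = (if a = f \<and> Suc k = m
      then \<lparr>ls_time = k, ls_init = True, ls_decided = None, ls_rd = None, ls_cnt = n\<rparr>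
      else waiting_state (n - t) k)"
  shows "mu (H k b) (Pbasic n b (H k b)) =
    (if b = f \<and> Suc k = m then Some (MDec True) else Some MInit1)"
proof (cases "b = f \<and> Suc k = m")
  case True
  moreover have "int n > int n - int k"
    using True m_ge by simp
  ultimately show ?thesis
    using assms(2) by (simp add: Pbasic_def mu_def)
next
  case False
  then have "H k b = waiting_state (n - t) k"
    using spec[OF assms(2), of b] by auto
  moreover have "k \<le> t"
    using assms(1) m_le by simp
  ultimately show ?thesis
    using False Pbasic_waiting_state t_less_n mu_waiting_state by simp
qed

lemma H_before:
  "k < m \<Longrightarrow> H k a = (if a = f \<and> Suc k = m
     then \<lparr>ls_time = k, ls_init = True, ls_decided = None, ls_rd = None, ls_cnt = n\<rparr>
     else waiting_state (n - t) k)"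
proof (induction k arbitrary: a)
  case 0
  then show ?case
    using m_ge by (auto simp: waiting_state_def init_state_def)
next
  case (Suc k)
  then have k: "k < m" "k \<le> t" "Suc k < m \<or> Suc k = m"
    using m_le by auto
  have msg: "mu (H k b) (Pbasic n b (H k b)) = Some MInit1" for b
    using msg_H[OF k(1)] Suc by simp
  define rcv where "rcv a = (\<lambda>b. if decision1_delivery N f i m k b a then Some MInit1 else None)" for a
  have "H (Suc k) a = delta n (H k a) (Pbasic n a (H k a)) (rcv a)"
    unfolding rcv_def by (simp only: state_Suc msg snd_conv)
  moreover have "{b. b < n \<and> rcv a b = Some MInit1} =
      (if Suc (Suc k) = m \<and> a = f then {..<n} else N)"
    using N_sub Suc.prems by (auto simp: rcv_def decision1_delivery_def)
  moreover have "H k a = waiting_state (n - t) k"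
    using Suc by auto
  moreover have "finite N"
    using N_sub finite_subset by blast
  ultimately show ?case
    using delta_no_decision1_heard[of n "rcv a" False] Pbasic_waiting_state[OF k(2) t_less_n] card_N
    by (auto simp: rcv_def waiting_state_def)
qed

lemma H_at_m:
  shows "H m i = \<lparr>ls_time = m, ls_init = True, ls_decided = None, ls_rd = Some True, ls_cnt = 0\<rparr>"
    and "ls_decided (H m j) \<noteq> Some False"
proof -
  obtain k where m: "m = Suc k"
    using m_ge by (cases m) auto
  then have k: "k < m" "k \<le> t"
    using m_le by auto
  note before = H_before[OF k(1)]
  define rcv where "rcv = (\<lambda>b. if decision1_delivery N f i m k b i
    then (if b = f \<and> Suc k = m then Some (MDec True) else Some MInit1) else None)"
  have Hi: "H k i = waiting_state (n - t) k"
    using before f_not_i by simp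
  have "H (Suc k) i = delta n (H k i) (Pbasic n i (H k i)) rcv"
    unfolding rcv_def by (simp only: state_Suc msg_H[OF k(1) allI[OF before]] snd_conv)
  also have "\<dots> = \<lparr>ls_time = Suc k, ls_init = True, ls_decided = None, ls_rd = Some True, ls_cnt = 0\<rparr>"
    unfolding Hi using delta_only_decision1_heard[of n rcv] f_less_n m
      Pbasic_waiting_state[OF k(2) t_less_n]
    by (auto simp: rcv_def decision1_delivery_def waiting_state_def)
  finally show "H m i = \<lparr>ls_time = m, ls_init = True, ls_decided = None, ls_rd = Some True, ls_cnt = 0\<rparr>"
    using m by simp
  have "Pbasic n j (H k j) \<noteq> Decide False"
    using msg_H[OF k(1) allI[OF before], of j] by (auto simp: mu_def split: if_splits)
  moreover have "ls_decided (H k j) = None"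
    using before by (auto simp: waiting_state_def)
  ultimately show "ls_decided (H m j) \<noteq> Some False"
    using m by (auto simp: decided_state_Suc split: action.splits)
qed

end

lemma runs_memI:
  assumes "N \<subseteq> {..<n}" and "card N = n - t" and "t < n" and "\<forall>k a b. a \<in> N \<longrightarrow> F k a b"
  shows "((N, F), ini) \<in> runs n t"
  using assms unfolding runs_def SO_def by (auto simp: card_Diff_subset finite_subset)

lemma transpose_less_iff:
  fixes i n x :: nat
  assumes "i < n"
  shows "transpose 0 i x < n \<longleftrightarrow> x < n"
proof -
  from assms have "0 < n"
    by simp
  with assms show ?thesis
    by (auto simp: transpose_def)
qed

lemma transpose_image_subset: "(i :: nat) < n \<Longrightarrow> A \<subseteq> {..<n} \<Longrightarrow> transpose 0 i ` A \<subseteq> {..<n}"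
  using transpose_less_iff by auto

lemma transpose_0_eq_iff: "transpose 0 i x = i \<longleftrightarrow> x = 0"
  by (auto simp: transpose_def)

lemmas transpose_simps = transpose_0_eq_iff
  inj_eq[OF inj_transpose] inj_image_mem_iff[OF inj_transpose] card_image[OF inj_on_transpose]

text \<open>In the witness runs below, transpose 0 i relabels agents so that i plays the role of
  agent 0.\<close>

lemma exists_run_no_jdecided0_no_rd:
  assumes "t < n" and "i < n" and "1 \<le> m" and "m \<le> Suc t" and "n - t \<le> c" and "c \<le> n"
  shows "\<exists>r\<in>runs n t.
    lst n (Pbasic n) r m i = \<lparr>ls_time = m, ls_init = True, ls_decided = None, ls_rd = None, ls_cnt = c\<rparr>
    \<and> (\<forall>j<n. \<not> jdecided0 n (Pbasic n) r m j)"
proof -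
  define N where "N = transpose 0 i ` ({0} \<union> {Suc t..<n})"
  define C where "C = transpose 0 i ` {1..<1 + (c - (n - t))}"
  interpret chain_witness n t N C id 0 m i
  proof
    show "N \<subseteq> {..<n}"
      unfolding N_def using assms by (intro transpose_image_subset) auto
    show "card N = n - t"
      unfolding N_def transpose_simps using assms by (subst card_Un_disjoint) auto
    have "{1..<1 + (c - (n - t))} \<subseteq> {..<n}"
      using assms by auto
    then show "C \<subseteq> {..<n} - N"
      unfolding C_def N_def using assms transpose_image_subset[of i n] by (auto simp: transpose_simps)
  qed (use assms in auto)
  have "card C = c - (n - t)"
    unfolding C_def transpose_simps by simp
  then have "G m i = \<lparr>ls_time = m, ls_init = True, ls_decided = None, ls_rd = None, ls_cnt = c\<rparr>"
    using G_outside_chain(2) assms by simp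
  moreover have "((N, chain_delivery N id 0 m i C), chain_init id 0) \<in> runs n t"
    using N_sub card_N t_less_n by (intro runs_memI) (auto simp: chain_delivery_def)
  ultimately show ?thesis
    using G_outside_chain(1) by (intro bexI) (auto simp: lst_def jdecided0_def)
qed

lemma exists_run_deciding0:
  assumes "t + 2 \<le> n" and "i < n" and "m \<le> t" and "c \<le> n - m"
    and "m = 0 \<Longrightarrow> c = 0" and "0 < m \<Longrightarrow> n - t \<le> c"
  shows "\<exists>r\<in>runs n t.
    lst n (Pbasic n) r m i = \<lparr>ls_time = m, ls_init = True, ls_decided = None, ls_rd = None, ls_cnt = c\<rparr>
    \<and> (\<exists>j<n. deciding0 n (Pbasic n) r m j)"
proof -
  define N where "N = transpose 0 i ` ({0, 1} \<union> {t + 2..<n})"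
  define C where "C = transpose 0 i ` {m + 2..<m + 2 + (c - (n - t))}"
  \<comment> \<open>The chain ends in the nonfaulty agent l m; together with i this needs n - t \<ge> 2.\<close>
  define l where "l j = transpose 0 i (Suc m - j)" for j
  have C_range: "{m + 2..<m + 2 + (c - (n - t))} \<subseteq> {..<n}"
    using assms by auto
  interpret chain_witness n t N C l "Suc m" m i
  proof
    show "N \<subseteq> {..<n}"
      unfolding N_def using assms by (intro transpose_image_subset) auto
    show "card N = n - t"
      unfolding N_def transpose_simps using assms by (subst card_Un_disjoint) auto
    show "C \<subseteq> {..<n} - N"
      unfolding C_def N_def using assms C_range transpose_image_subset[of i n]
      by (auto simp: transpose_simps)
    show "\<forall>j<Suc m. l j < n"
      unfolding l_def using assms by (auto simp: transpose_less_iff)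
    show "inj_on l {..<Suc m}"
      unfolding l_def inj_on_def by (auto simp: transpose_simps)
  qed (use assms in \<open>auto simp: l_def N_def C_def transpose_simps\<close>)
  have "card C = c - (n - t)"
    unfolding C_def transpose_simps by simp
  moreover have "i \<notin> l ` {..<Suc m}"
    using l_not_i by auto
  ultimately have "G m i = \<lparr>ls_time = m, ls_init = True, ls_decided = None, ls_rd = None, ls_cnt = c\<rparr>"
    using G_outside_chain(2) assms by auto
  moreover have "((N, chain_delivery N l (Suc m) m i C), chain_init l (Suc m)) \<in> runs n t"
    using N_sub card_N t_less_n by (intro runs_memI) (auto simp: chain_delivery_def)
  moreover have "l m < n"
    using l_range by simp
  ultimately show ?thesis
    using chain_end_decides0 by (intro bexI) (auto simp: lst_def deciding0_def)
qed

lemma exists_run_no_jdecided0_rd_True: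
  assumes "t < n" and "i < n" and "2 \<le> m" and "m \<le> Suc t"
  shows "\<exists>r\<in>runs n t.
    lst n (Pbasic n) r m i = \<lparr>ls_time = m, ls_init = True, ls_decided = None, ls_rd = Some True, ls_cnt = 0\<rparr>
    \<and> (\<forall>j<n. \<not> jdecided0 n (Pbasic n) r m j)"
proof -
  define N where "N = transpose 0 i ` ({0} \<union> {Suc t..<n})"
  interpret decision1_witness n t N "transpose 0 i 1" i m
  proof
    show "N \<subseteq> {..<n}"
      unfolding N_def using assms by (intro transpose_image_subset) auto
    show "card N = n - t"
      unfolding N_def transpose_simps using assms by (subst card_Un_disjoint) auto
  qed (use assms in \<open>auto simp: N_def transpose_simps transpose_less_iff\<close>)
  have "((N, decision1_delivery N (transpose 0 i 1) i m), \<lambda>_. True) \<in> runs n t"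
    using N_sub card_N t_less_n by (intro runs_memI) (auto simp: decision1_delivery_def)
  then show ?thesis
    using H_at_m by (intro bexI) (auto simp: lst_def jdecided0_def)
qed

lemma undecided_lstate_eq:
  "ls_time s = m \<Longrightarrow> ls_init s \<Longrightarrow> ls_decided s = None \<Longrightarrow>
    s = \<lparr>ls_time = m, ls_init = True, ls_decided = None, ls_rd = ls_rd s, ls_cnt = ls_cnt s\<rparr>"
  by (cases s) simp

lemma knows_jdecided0_if_rd_False:
  assumes "ls_rd s = Some False"
  shows "knows n t (Pbasic n) i s (\<lambda>r m. \<exists>j<n. jdecided0 n (Pbasic n) r m j)"
  unfolding knows_def
proof (intro ballI allI impI)
  fix r m
  assume "lst n (Pbasic n) r m i = s"
  then have rd: "ls_rd (gstate n (Pbasic n) (fst r) (snd r) m i) = Some False"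
    using assms by (simp add: lst_def)
  then obtain k where m: "m = Suc k"
    by (cases m) (auto simp: init_state_def)
  with rd obtain b where b: "b < n" "Pbasic n b (gstate n (Pbasic n) (fst r) (snd r) k b) = Decide False"
    using rd_Some_False_sender by blast
  then have "ls_decided (gstate n (Pbasic n) (fst r) (snd r) k b) = None"
    using Pbasic_decided by fastforce
  with b m show "\<exists>j<n. jdecided0 n (Pbasic n) r m j"
    by (auto simp: jdecided0_def lst_def decided_state_Suc)
qed

lemma knows_no_deciding0_if_Decide_True:
  assumes "Pbasic n i s = Decide True"
  shows "knows n t (Pbasic n) i s (\<lambda>r m. \<forall>j<n. \<not> deciding0 n (Pbasic n) r m j)"
  unfolding knows_def
proof (intro ballI allI impI)
  fix r m j
  assume "lst n (Pbasic n) r m i = s" and "j < n"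
  then show "\<not> deciding0 n (Pbasic n) r m j"
    using Decide_True_imp_not_someone_decides0[where fp = "fst r" and ini = "snd r"] assms
    by (auto simp: lst_def someone_decides0_def deciding0_def)
qed

context
  fixes n t i m :: nat and r :: run and s :: lstate
  assumes t_less_n: "t < n" and i_less_n: "i < n" and run: "r \<in> runs n t"
    and s: "s = lst n (Pbasic n) r m i"
    and undecided: "ls_decided s = None" and init: "ls_init s"
begin

lemma s_gstate:
  obtains fp ini where "fp \<in> SO n t" and "s = gstate n (Pbasic n) fp ini m i"
  using run s by (auto simp: runs_def lst_def)

lemma s_record: "s = \<lparr>ls_time = m, ls_init = True, ls_decided = None, ls_rd = ls_rd s, ls_cnt = ls_cnt s\<rparr>"
  using undecided_lstate_eq[OF _ init undecided] s by (simp add: lst_def)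

lemma knows_jdecided0_iff:
  "knows n t (Pbasic n) i s (\<lambda>r m. \<exists>j<n. jdecided0 n (Pbasic n) r m j) \<longleftrightarrow> ls_rd s = Some False"
proof
  assume K: "knows n t (Pbasic n) i s (\<lambda>r m. \<exists>j<n. jdecided0 n (Pbasic n) r m j)"
  show "ls_rd s = Some False"
  proof (rule ccontr)
    assume rd: "ls_rd s \<noteq> Some False"
    obtain fp ini where fp: "fp \<in> SO n t" and s_run: "s = gstate n (Pbasic n) fp ini m i"
      by (rule s_gstate)
    have "m \<le> Suc t"
      using undecided_time_le[OF fp t_less_n] undecided s_run by simp
    consider "m = 0" | "0 < m" "ls_rd s = None" | "ls_rd s = Some True"
      using rd by (cases "ls_rd s") auto
    then show False
    proof cases
      case 1
      then show False
        using K run s unfolding knows_def by (auto simp: jdecided0_def)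
    next
      case 2
      then have "n - t \<le> ls_cnt s"
        using undecided_cnt_ge[OF fp] undecided s_run by simp
      moreover have "ls_cnt s \<le> n"
        using cnt_state_le s_run by simp
      ultimately show False
        using exists_run_no_jdecided0_no_rd[OF t_less_n i_less_n _ \<open>m \<le> Suc t\<close>] 2 K s_record
        by (fastforce simp: knows_def)
    next
      case 3
      then have "2 \<le> m" "ls_cnt s = 0"
        using rd_True_time_cnt s_run by auto
      then show False
        using exists_run_no_jdecided0_rd_True[OF t_less_n i_less_n _ \<open>m \<le> Suc t\<close>] 3 K s_record
        by (fastforce simp: knows_def)
    qed
  qed
qed (rule knows_jdecided0_if_rd_False)

lemma knows_no_deciding0_iff:
  assumes "t + 2 \<le> n" and "ls_rd s \<noteq> Some False"
  shows "knows n t (Pbasic n) i s (\<lambda>r m. \<forall>j<n. \<not> deciding0 n (Pbasic n) r m j) \<longleftrightarrow>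
    int (ls_cnt s) > int n - int m \<or> ls_rd s = Some True"
proof
  assume K: "knows n t (Pbasic n) i s (\<lambda>r m. \<forall>j<n. \<not> deciding0 n (Pbasic n) r m j)"
  show "int (ls_cnt s) > int n - int m \<or> ls_rd s = Some True"
  proof (rule ccontr)
    assume not_rule1: "\<not> (int (ls_cnt s) > int n - int m \<or> ls_rd s = Some True)"
    with assms(2) have rd: "ls_rd s = None"
      by (cases "ls_rd s") auto
    from not_rule1 have cnt: "ls_cnt s \<le> n - m"
      by arith
    obtain fp ini where fp: "fp \<in> SO n t" and s_run: "s = gstate n (Pbasic n) fp ini m i"
      by (rule s_gstate)
    have cnt_ge: "0 < m \<Longrightarrow> n - t \<le> ls_cnt s"
      using undecided_cnt_ge[OF fp] undecided rd s_run by simp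
    then have "m \<le> t"
      using cnt t_less_n by (cases "m = 0") auto
    moreover have "m = 0 \<Longrightarrow> ls_cnt s = 0"
      using s_run by (simp add: init_state_def)
    ultimately show False
      using exists_run_deciding0[OF assms(1) i_less_n _ cnt _ cnt_ge] rd K s_record
      by (fastforce simp: knows_def)
  qed
next
  assume "int (ls_cnt s) > int n - int m \<or> ls_rd s = Some True"
  then have "Pbasic n i s = Decide True"
    using undecided init assms(2) s by (auto simp: Pbasic_def lst_def)
  then show "knows n t (Pbasic n) i s (\<lambda>r m. \<forall>j<n. \<not> deciding0 n (Pbasic n) r m j)"
    by (rule knows_no_deciding0_if_Decide_True)
qed

end

theorem mainTheorem5:
  fixes n t :: nat
  assumes "t + 2 \<le> n"
  shows "implements n t (Pbasic n)"
  unfolding implements_def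
proof (intro allI impI ballI)
  fix i r m
  assume i: "i < n" and r: "r \<in> runs n t"
  define s where "s = lst n (Pbasic n) r m i"
  have time: "ls_time s = m"
    using r by (auto simp: s_def lst_def runs_def)
  consider "ls_decided s \<noteq> None" | "ls_decided s = None" "\<not> ls_init s"
    | "ls_decided s = None" "ls_init s" "ls_rd s = Some False"
    | "ls_decided s = None" "ls_init s" "ls_rd s \<noteq> Some False"
    by blast
  then show "Pbasic n i s = P0 n t (Pbasic n) i s"
  proof cases
    case 3
    then show ?thesis
      using knows_jdecided0_if_rd_False[of s n t i] by (simp add: Pbasic_def P0_def)
  next
    case 4
    with assms time show ?thesis
      using knows_jdecided0_iff[OF _ i r s_def 4(1,2)]
        knows_no_deciding0_iff[OF _ i r s_def 4(1,2) assms 4(3)]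
      by (simp add: Pbasic_def P0_def)
  qed (auto simp: Pbasic_def P0_def)
qed
end
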